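(* Let $K=\mathrm{GF}(2)(x)[Y]/(Y^2+xY+1)$ and $\rho$ the residue class of $Y$. For every $k\ge1$, $$x\,f^{(2k-2)}(x,1)=x\,f^{(2k-1)}(x,1)=(1+\rho)\rho^k+(1+\rho^{-1})\rho^{-k}.$$
   Context: $\mathbb{F}=\mathrm{GF}(2)$, $R=\mathbb{F}[x,z]$, $|\cdot|$ is total degree. Let $(r_0,r_1,\ldots)$ be the binary sequence with $r_i=1$ if $i=2^j-1$ for some $j\ge 0$ and $r_i=0$ otherwise. For $n\ge1$ its inverse form is $R^{(1-n)}=\sum_{j=1-n}^{0}r_{-j}\,x^{j}z^{1-n-j}\in\mathbb{F}[x^{-1},z^{-1}]$. For a form $f\in R$ and such a form $G$, $\Delta(f;G)$ is the coefficient of $x^{|f|+|G|}z^0$ in $f\cdot G$ computed in $\mathbb{F}[x^{\pm1},z^{\pm1}]$ if $|f|+|G|\le 0$, and $0$ otherwise. Define forms recursively: $(f^{(0)},g^{(0)})=(x+z,z)$; for $k\ge0$ let $d_k=|g^{(k)}|-|f^{(k)}|$ and $\Delta_k=\Delta(f^{(k)};R^{(-1-k)})$, and set $(f^{(k+1)},g^{(k+1)})=(f^{(k)},zg^{(k)})$ if $\Delta_k=0$; $=(f^{(k)}+x^{-d_k}g^{(k)},\,zg^{(k)})$ if $\Delta_k=1$ and $d_k\le0$; $=(x^{d_k}f^{(k)}+g^{(k)},\,zf^{(k)})$ if $\Delta_k=1$ and $d_k>0$. *)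

theory Defs
  imports "HOL-Library.Z2" "HOL-Computational_Algebra.Polynomial" "HOL-Computational_Algebra.Polynomial_Factorial"
begin

text \<open>A bivariate polynomial f in R = GF(2)[x,z] is represented as
  a polynomial in z whose coefficients are polynomials in x, i.e. a bit poly poly; the
  coefficient of x^i z^j in f is coeff (coeff f j) i.\<close>

type_synonym form = "bit poly poly"

definition cf :: "form \<Rightarrow> nat \<Rightarrow> nat \<Rightarrow> bit" where
  "cf f i j = coeff (coeff f j) i"

definition Xf :: form where "Xf = [:[:0, 1:]:]"
definition Zf :: form where "Zf = [:0, 1:]"

definition tdeg :: "form \<Rightarrow> nat" where
  "tdeg f = Max (insert 0 {i + j | i j. cf f i j \<noteq> 0})"

definition rseq :: "nat \<Rightarrow> bit" where
  "rseq i = (if \<exists>j. i = 2 ^ j - 1 then 1 else 0)"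

text \<open>Coefficient of x^a z^b (a, b integers) in the inverse form
  R^(1-n) = sum_{j=1-n}^{0} r_(-j) x^j z^(1-n-j).\<close>
definition Rinv :: "nat \<Rightarrow> int \<Rightarrow> int \<Rightarrow> bit" where
  "Rinv n a b = (if 1 - int n \<le> a \<and> a \<le> 0 \<and> b = 1 - int n - a then rseq (nat (- a)) else 0)"

text \<open>Delta(f; R^(1-n)): coefficient of x^(|f|+|G|) z^0 in f * G (Laurent product), with
  |G| = 1 - n, if |f| + |G| <= 0, and 0 otherwise.\<close>
definition Delta :: "form \<Rightarrow> nat \<Rightarrow> bit" where
  "Delta f n = (if int (tdeg f) + (1 - int n) \<le> 0 then
      (\<Sum>(i, j) \<in> {..tdeg f} \<times> {..tdeg f}.
         cf f i j * Rinv n (int (tdeg f) + (1 - int n) - int i) (0 - int j))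
    else 0)"

fun fg :: "nat \<Rightarrow> form \<times> form" where
  "fg 0 = (Xf + Zf, Zf)"
| "fg (Suc k) = (let (f, g) = fg k;
                     d = int (tdeg g) - int (tdeg f);
                     \<Delta> = Delta f (k + 2) in
     if \<Delta> = 0 then (f, Zf * g)
     else if d \<le> 0 then (f + Xf ^ nat (- d) * g, Zf * g)
     else (Xf ^ nat d * f + g, Zf * f))"

definition eval_z1 :: "form \<Rightarrow> bit poly" where
  "eval_z1 f = poly f 1"

text \<open>K = GF(2)(x)[Y]/(Y^2 + xY + 1): elements are represented by polynomials in Y over
  GF(2)(x) = bit poly fract, equality in K being equality of residues modulo mY.\<close>
definition xK :: "bit poly fract" where "xK = to_fract [:0, 1:]"
definition mY :: "bit poly fract poly" where "mY = [:1, xK, 1:]"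
definition rho :: "bit poly fract poly" where "rho = [:0, 1:]"

end

theory Submission
  imports Defs "HOL-Computational_Algebra.Polynomial_FPS"
begin

text \<open>Over GF(2) squaring is additive, so the generating series R = sum r_n X^n satisfies
  R = 1 + X R^2. The forms f^(k), g^(k) stay homogeneous, and the discrepancy of f against
  R^(1-n) is the coefficient of X^(n-1) in f(1,X) R(X). With lam = X (1 + R) one has
  lam^2 = lam + X^2, and f^(2m)(1,X) R differs by a polynomial of degree at most m from
  lam^m ((1 + X) R + 1), a series of order exactly 2m + 2. Hence the discrepancies alternate
  0, 1, the recursion alternates between g := z g and (f, g) := (x f + z g, z f), and
  E_m = f^(2m-2)(x,1) obeys E_(m+2) = x E_(m+1) + E_m. So does
  (1 + rho) rho^k + (1 + rho^-1) rho^-k, because rho and rho^-1 = rho + x are the roots of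
  Y^2 + x Y + 1; the two sides agree initially.\<close>

unbundle fps_syntax

lemma char_two_add_self:
  assumes "(2::'a::comm_ring_1) = 0"
  shows "(x::'a) + x = 0"
  by (metis assms mult_2 mult_zero_left)

lemma char_two_poly:
  assumes "(2::'a::comm_ring_1) = 0"
  shows "(2::'a poly) = 0"
  by (simp add: assms numeral_poly)

lemma char_two_fract:
  assumes "(2::'a::idom) = 0"
  shows "(2::'a fract) = 0"
  by (metis assms one_add_one to_fract_0 to_fract_1 to_fract_add)

lemma sum_symmetric_char_two:
  fixes g :: "nat \<Rightarrow> 'a::comm_ring_1"
  assumes "(2::'a) = 0" and sym: "\<And>i. i \<le> n \<Longrightarrow> g (n - i) = g i"
  shows "(\<Sum>i=0..n. g i) = (if even n then g (n div 2) else 0)"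
proof -
  define A where "A = {i. i \<le> n \<and> 2 * i < n}"
  define B where "B = {i. i \<le> n \<and> n < 2 * i}"
  have split: "{0..n} = A \<union> B \<union> {i. 2 * i = n}" unfolding A_def B_def by auto
  have "sum g B = sum g A"
    by (rule sum.reindex_bij_witness[where i="\<lambda>i. n - i" and j="\<lambda>i. n - i"])
       (auto simp: A_def B_def sym)
  moreover have "{i. 2 * i = n} = (if even n then {n div 2} else {})" by auto
  moreover have "sum g (A \<union> B) = sum g A + sum g B"
    by (rule sum.union_disjoint) (auto simp: A_def B_def)
  ultimately show ?thesis
    unfolding split using char_two_add_self[OF assms(1)]
    by (subst sum.union_disjoint) (auto simp: A_def B_def)
qed

lemma fps_square_nth_char_two:
  fixes f :: "'a::comm_ring_1 fps"
  assumes "(2::'a) = 0"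
  shows "(f * f) $ n = (if even n then (f $ (n div 2))^2 else 0)"
proof -
  have "(f * f) $ n = (\<Sum>i=0..n. f $ i * f $ (n - i))" by (rule fps_mult_nth)
  also have "\<dots> = (if even n then f $ (n div 2) * f $ (n - n div 2) else 0)"
    by (rule sum_symmetric_char_two[OF assms]) (simp add: mult.commute)
  finally show ?thesis by (auto simp: power2_eq_square elim!: evenE)
qed

lemma rseq_eq_if_Suc_power_two: "rseq i = (if \<exists>j. Suc i = 2 ^ j then 1 else 0)"
proof -
  have "i = 2 ^ j - 1 \<longleftrightarrow> Suc i = 2 ^ j" for j
    using one_le_power[of "2::nat" j] by linarith
  then show ?thesis by (simp add: rseq_def)
qed

lemma rseq_0 [simp]: "rseq 0 = 1"
  by (auto simp: rseq_eq_if_Suc_power_two intro: exI[of _ 0])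

lemma rseq_odd [simp]: "rseq (Suc (2 * m)) = rseq m"
proof -
  have "Suc (Suc (2 * m)) = 2 ^ j \<longleftrightarrow> (\<exists>i. j = Suc i \<and> Suc m = 2 ^ i)" for j
    by (cases j) auto
  then show ?thesis by (auto simp: rseq_eq_if_Suc_power_two)
qed

lemma rseq_even [simp]: "rseq (Suc (Suc (2 * m))) = 0"
proof -
  have "Suc (Suc (Suc (2 * m))) \<noteq> 2 ^ j" for j
    by (cases j) (auto, presburger)
  then show ?thesis by (simp add: rseq_eq_if_Suc_power_two)
qed

lemma rseq_1 [simp]: "rseq (Suc 0) = 1"
  using rseq_odd[of 0] by (simp del: rseq_odd)

lemma rseq_2 [simp]: "rseq (Suc (Suc 0)) = 0"
  using rseq_even[of 0] by (simp add: numeral_2_eq_2)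

definition rfps :: "bit fps" where "rfps = Abs_fps rseq"

lemma rfps_nth [simp]: "rfps $ n = rseq n"
  by (simp add: rfps_def)

lemma rfps_functional_equation: "rfps = 1 + fps_X * rfps\<^sup>2"
proof (rule fps_ext)
  fix n
  show "rfps $ n = (1 + fps_X * rfps\<^sup>2) $ n"
  proof (cases n)
    case (Suc n')
    then show ?thesis
      by (cases "even n'") (auto simp: power2_eq_square fps_square_nth_char_two elim!: evenE oddE)
  qed simp
qed

lemma rfps_functional_equation_diff: "rfps - 1 - fps_X * rfps\<^sup>2 = 0"
  by (subst (1) rfps_functional_equation) simp

definition lam :: "bit fps" where "lam = fps_X * (1 + rfps)"

lemma lam_squared: "lam\<^sup>2 = lam + fps_X\<^sup>2"
proof -
  have "lam\<^sup>2 = lam + fps_X\<^sup>2 - fps_X * (rfps - 1 - fps_X * rfps\<^sup>2)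
      + 2 * (fps_X\<^sup>2 * rfps - fps_X)"
    unfolding lam_def by algebra
  then show ?thesis by (simp add: rfps_functional_equation_diff)
qed

lemma subdegree_lam: "subdegree lam = 2" and lam_nonzero: "lam \<noteq> 0"
proof -
  have "(1 + rfps) $ 1 \<noteq> 0" by simp
  moreover from this have "subdegree (1 + rfps) = 1"
    by (rule subdegreeI) simp
  ultimately have "subdegree (1 + rfps) = 1" "1 + rfps \<noteq> 0" by auto
  then show "subdegree lam = 2" "lam \<noteq> 0" by (simp_all add: lam_def)
qed

fun fz :: "nat \<Rightarrow> bit poly" and gz :: "nat \<Rightarrow> bit poly" where
  "fz 0 = [:1, 1:]"
| "fz (Suc m) = fz m + pCons 0 (gz m)"
| "gz 0 = [:0, 1:]"
| "gz (Suc m) = pCons 0 (fz m)"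

text \<open>The polynomial part that makes dseries obey the same recurrence as the powers of lam.\<close>

fun qz :: "nat \<Rightarrow> bit poly" where
  "qz 0 = 1"
| "qz (Suc 0) = 1"
| "qz (Suc (Suc m)) = qz (Suc m) + pCons 0 (pCons 0 (qz m))"

lemma degree_qz: "degree (qz m) \<le> m"
  by (induction m rule: qz.induct) (auto intro!: degree_add_le simp: degree_pCons_le)

definition dseries :: "nat \<Rightarrow> bit fps" where
  "dseries m = fps_of_poly (fz m) * rfps + fps_of_poly (qz m)"

lemma dseries_Suc_Suc: "dseries (Suc (Suc m)) = dseries (Suc m) + fps_X\<^sup>2 * dseries m"
  by (simp add: dseries_def fps_of_poly_add fps_of_poly_pCons algebra_simps power2_eq_square)

lemma dseries_eq_lam_power: "dseries m = lam ^ m * dseries 0"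
proof (induction m rule: qz.induct)
  case 2
  have "lam * dseries 0 = dseries 1 - (1 + fps_X) * (rfps - 1 - fps_X * rfps\<^sup>2)
      + 2 * (fps_X * rfps - 1)"
    by (simp add: lam_def dseries_def fps_of_poly_add fps_of_poly_pCons) algebra
  then show ?case by (simp add: rfps_functional_equation_diff)
next
  case (3 m)
  then have "dseries (Suc (Suc m)) = lam ^ m * (lam + fps_X\<^sup>2) * dseries 0"
    by (simp add: dseries_Suc_Suc algebra_simps)
  also have "\<dots> = lam ^ Suc (Suc m) * dseries 0"
    unfolding lam_squared[symmetric] by (simp add: power2_eq_square mult_ac)
  finally show ?case .
qed simp

lemma subdegree_dser_0: "subdegree (dseries 0) = 2" and dseries_0_nonzero: "dseries 0 \<noteq> 0"
proof -
  have "dseries 0 = rfps + fps_X * rfps + 1"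
    by (simp add: dseries_def fps_of_poly_linear' distrib_right)
  then have nth: "dseries 0 $ 0 = 0" "dseries 0 $ 1 = 0" "dseries 0 $ 2 = 1"
    by (simp_all add: numeral_2_eq_2 fps_X_mult_nth)
  then show "subdegree (dseries 0) = 2"
    by (intro subdegreeI) (auto simp: less_2_cases_iff)
  from nth show "dseries 0 \<noteq> 0" by auto
qed

lemma subdegree_dseries: "subdegree (dseries m) = 2 * m + 2"
  and dseries_nonzero: "dseries m \<noteq> 0"
  using subdegree_lam subdegree_dser_0 lam_nonzero dseries_0_nonzero
  by (simp_all add: dseries_eq_lam_power[of m])

lemma fz_times_rfps_nth:
  "(fps_of_poly (fz m) * rfps) $ (2 * m + 1) = 0"
  "(fps_of_poly (fz m) * rfps) $ (2 * m + 2) = 1"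
proof -
  have "fps_of_poly (fz m) * rfps = dseries m + fps_of_poly (qz m)"
    by (simp add: dseries_def add.assoc)
  moreover have "coeff (qz m) n = 0" if "n > m" for n
    using degree_qz[of m] that by (simp add: coeff_eq_0)
  moreover have "dseries m $ (2 * m + 1) = 0"
    using subdegree_dseries[of m] by (intro nth_less_subdegree_zero) simp
  moreover have "dseries m $ (2 * m + 2) = 1"
    using nth_subdegree_nonzero[OF dseries_nonzero[of m]] by (simp add: subdegree_dseries)
  ultimately show "(fps_of_poly (fz m) * rfps) $ (2 * m + 1) = 0"
    "(fps_of_poly (fz m) * rfps) $ (2 * m + 2) = 1" by simp_all
qed

definition homog :: "nat \<Rightarrow> bit poly \<Rightarrow> form" where
  "homog d p = (\<Sum>j\<le>d. monom (monom (coeff p j) (d - j)) j)"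

lemma coeff_homog: "coeff (homog d p) j = (if j \<le> d then monom (coeff p j) (d - j) else 0)"
  by (simp add: homog_def coeff_sum coeff_monom)

lemma cf_homog: "cf (homog d p) i j = (if j \<le> d \<and> i = d - j then coeff p j else 0)"
  by (auto simp: cf_def coeff_homog coeff_monom)

lemma tdeg_homog:
  assumes "p \<noteq> 0" "degree p \<le> d"
  shows "tdeg (homog d p) = d"
proof -
  have "cf (homog d p) (d - degree p) (degree p) \<noteq> 0"
    using assms by (simp add: cf_homog)
  moreover have "d = (d - degree p) + degree p" using assms(2) by simp
  ultimately have "d \<in> {i + j | i j. cf (homog d p) i j \<noteq> 0}"
    by blast
  then have "{i + j | i j. cf (homog d p) i j \<noteq> 0} = {d}"
    by (auto simp: cf_homog split: if_splits)
  then show ?thesis by (simp add: tdeg_def)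
qed

lemma homog_add: "homog d (p + q) = homog d p + homog d q"
  by (rule poly_eqI) (simp add: coeff_homog add_monom)

lemma Xf_mult_homog:
  assumes "degree p \<le> d"
  shows "Xf * homog d p = homog (Suc d) p"
proof (rule poly_eqI)
  fix j
  have "Xf * F = smult (monom 1 1) F" for F
    by (simp add: Xf_def monom_Suc one_pCons)
  moreover have "coeff p j = 0" if "\<not> j \<le> d"
    using assms that by (simp add: coeff_eq_0)
  ultimately show "coeff (Xf * homog d p) j = coeff (homog (Suc d) p) j"
    by (auto simp: coeff_homog mult_monom Suc_diff_le)
qed

lemma Zf_mult_homog: "Zf * homog d p = homog (Suc d) (pCons 0 p)"
  by (rule poly_eqI) (simp add: Zf_def coeff_homog coeff_pCons split: nat.split)

lemma homog_fz_0: "homog (Suc 0) [:1, 1:] = Xf + Zf"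
  and homog_gz_0: "homog (Suc 0) [:0, 1:] = Zf"
  by (simp_all add: homog_def Xf_def Zf_def monom_Suc monom_0)

lemma Delta_homog:
  assumes "p \<noteq> 0" "degree p \<le> d" "d < n"
  shows "Delta (homog d p) n = (fps_of_poly p * rfps) $ (n - 1)"
proof -
  let ?R = "\<lambda>i j. Rinv n (int d + (1 - int n) - int i) (0 - int j)"
  have inner: "(\<Sum>i\<le>d. cf (homog d p) i j * ?R i j) = coeff p j * rseq (n - 1 - j)"
    if "j \<le> d" for j
  proof -
    have "(\<Sum>i\<le>d. cf (homog d p) i j * ?R i j)
        = (\<Sum>i\<le>d. if i = d - j then coeff p j * ?R i j else 0)"
      using that by (intro sum.cong) (auto simp: cf_homog)
    also have "\<dots> = coeff p j * ?R (d - j) j"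
      by (simp add: sum.delta')
    also have "?R (d - j) j = rseq (n - 1 - j)"
      using that assms(3) by (simp add: Rinv_def nat_diff_distrib')
    finally show ?thesis .
  qed
  have "Delta (homog d p) n = (\<Sum>(i, j) \<in> {..d} \<times> {..d}. cf (homog d p) i j * ?R i j)"
    using assms by (simp add: Delta_def tdeg_homog)
  also have "\<dots> = (\<Sum>j\<le>d. \<Sum>i\<le>d. cf (homog d p) i j * ?R i j)"
    unfolding sum.cartesian_product[symmetric] by (rule sum.swap)
  also have "\<dots> = (\<Sum>j\<le>d. coeff p j * rseq (n - 1 - j))"
    by (intro sum.cong refl inner) simp
  also have "\<dots> = (\<Sum>j=0..n-1. coeff p j * rseq (n - 1 - j))"
    using assms by (intro sum.mono_neutral_left) (auto simp: coeff_eq_0)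
  also have "\<dots> = (fps_of_poly p * rfps) $ (n - 1)"
    by (simp add: fps_mult_nth)
  finally show ?thesis .
qed

lemma coeff_fz_0: "coeff (fz m) 0 = 1"
  by (induction m) simp_all

lemma fz_nonzero: "fz m \<noteq> 0"
  using coeff_fz_0[of m] by auto

lemma gz_nonzero: "gz m \<noteq> 0"
  by (cases m) (simp_all add: fz_nonzero)

lemma degree_fz_gz: "degree (fz m) \<le> Suc m \<and> degree (gz m) \<le> Suc m"
proof (induction m)
  case (Suc m)
  then have "degree (pCons 0 (gz m)) \<le> Suc (Suc m)" "degree (pCons 0 (fz m)) \<le> Suc (Suc m)"
    by (simp_all add: degree_pCons_le le_SucI)
  then show ?case
    using Suc by (auto intro!: degree_add_le simp del: pCons_0_0)
qed simp

lemma fg_Suc_even: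
  assumes "fg (2 * m) = (homog (Suc m) (fz m), homog (Suc m) (gz m))"
  shows "fg (Suc (2 * m)) = (homog (Suc m) (fz m), homog (Suc (Suc m)) (pCons 0 (gz m)))"
proof -
  have "Delta (homog (Suc m) (fz m)) (2 * m + 2) = 0"
    using Delta_homog[of "fz m" "Suc m" "2 * m + 2"] fz_times_rfps_nth(1)[of m]
      fz_nonzero degree_fz_gz by simp
  then show ?thesis by (simp add: assms Let_def Zf_mult_homog)
qed

lemma fg_Suc_odd:
  assumes "fg (Suc (2 * m)) = (homog (Suc m) (fz m), homog (Suc (Suc m)) (pCons 0 (gz m)))"
  shows "fg (Suc (Suc (2 * m))) =
    (homog (Suc (Suc m)) (fz (Suc m)), homog (Suc (Suc m)) (gz (Suc m)))"
proof -
  have deg: "degree (fz m) \<le> Suc m" "degree (gz m) \<le> Suc m"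
    using degree_fz_gz by auto
  have "Delta (homog (Suc m) (fz m)) (2 * m + 3) = 1"
    using Delta_homog[of "fz m" "Suc m" "2 * m + 3"] fz_times_rfps_nth(2)[of m] fz_nonzero deg
    by (simp add: numeral_3_eq_3)
  moreover have "tdeg (homog (Suc m) (fz m)) = Suc m"
    using deg fz_nonzero by (simp add: tdeg_homog)
  moreover have "tdeg (homog (Suc (Suc m)) (pCons 0 (gz m))) = Suc (Suc m)"
    using deg gz_nonzero by (intro tdeg_homog) auto
  ultimately have "fg (Suc (Suc (2 * m))) =
      (Xf * homog (Suc m) (fz m) + homog (Suc (Suc m)) (pCons 0 (gz m)), Zf * homog (Suc m) (fz m))"
    by (subst fg.simps(2), simp only: assms) (simp add: Let_def numeral_3_eq_3)
  then show ?thesis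
    using deg by (simp add: Xf_mult_homog Zf_mult_homog homog_add)
qed

lemma fg_even: "fg (2 * m) = (homog (Suc m) (fz m), homog (Suc m) (gz m))"
proof (induction m)
  case 0
  show ?case by (simp add: homog_fz_0 homog_gz_0)
next
  case (Suc m)
  show ?case using fg_Suc_odd[OF fg_Suc_even[OF Suc.IH]] by simp
qed

lemma fst_fg_odd: "fst (fg (Suc (2 * m))) = homog (Suc m) (fz m)"
  using fg_Suc_even[OF fg_even] by simp

lemma eval_z1_add [simp]: "eval_z1 (f + g) = eval_z1 f + eval_z1 g"
  and eval_z1_mult [simp]: "eval_z1 (f * g) = eval_z1 f * eval_z1 g"
  and eval_z1_Xf [simp]: "eval_z1 Xf = [:0, 1:]"
  and eval_z1_Zf [simp]: "eval_z1 Zf = 1"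
  by (simp_all add: eval_z1_def Xf_def Zf_def)

text \<open>fx n = f^(2n-2)(x,1) for n \<ge> 1; the value at 0 continues fx_Suc_Suc backwards.\<close>

fun fx :: "nat \<Rightarrow> bit poly" where
  "fx 0 = 1"
| "fx (Suc m) = eval_z1 (homog (Suc m) (fz m))"

lemma eval_z1_homog_gz: "eval_z1 (homog (Suc m) (gz m)) = fx m"
proof (cases m)
  case 0
  then show ?thesis by (simp add: homog_gz_0)
qed (simp flip: Zf_mult_homog)

lemma fx_Suc_Suc: "fx (Suc (Suc m)) = [:0, 1:] * fx (Suc m) + fx m"
proof -
  have "homog (Suc (Suc m)) (fz (Suc m)) = Xf * homog (Suc m) (fz m) + Zf * homog (Suc m) (gz m)"
    using degree_fz_gz[of m] by (simp add: Xf_mult_homog Zf_mult_homog homog_add)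
  then show ?thesis by (simp add: eval_z1_homog_gz)
qed

lemma dvd_diff_of_linear_recurrence:
  fixes a b :: "nat \<Rightarrow> 'a::comm_ring_1"
  assumes "m dvd a 0 - b 0" "m dvd a 1 - b 1"
    and "\<And>n. m dvd a (Suc (Suc n)) - (c * a (Suc n) + a n)"
    and "\<And>n. m dvd b (Suc (Suc n)) - (c * b (Suc n) + b n)"
  shows "m dvd a n - b n"
proof -
  have "m dvd a n - b n \<and> m dvd a (Suc n) - b (Suc n)"
  proof (induction n)
    case (Suc n)
    have "a (Suc (Suc n)) - b (Suc (Suc n)) =
        (a (Suc (Suc n)) - (c * a (Suc n) + a n)) - (b (Suc (Suc n)) - (c * b (Suc n) + b n))
        + c * (a (Suc n) - b (Suc n)) + (a n - b n)"
      by (simp add: algebra_simps)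
    moreover have "m dvd \<dots>"
      using Suc assms(3,4) by (blast intro: dvd_add dvd_diff dvd_mult)
    ultimately show ?case
      using Suc by argo
  qed (use assms(1,2) in simp)
  then show ?thesis ..
qed

lemma dvd_geometric_recurrence:
  fixes s :: "'a::comm_ring_1"
  assumes "m dvd s\<^sup>2 - (c * s + 1)"
  shows "m dvd u * s ^ Suc (Suc n) - (c * (u * s ^ Suc n) + u * s ^ n)"
proof -
  have "u * s ^ Suc (Suc n) - (c * (u * s ^ Suc n) + u * s ^ n) = u * s ^ n * (s\<^sup>2 - (c * s + 1))"
    by (simp add: algebra_simps power2_eq_square)
  then show ?thesis using assms by simp
qed

lemma two_K: "(2::bit poly fract poly) = 0"
  by (intro char_two_poly char_two_fract) simp

definition xc :: "bit poly fract poly" where "xc = [:xK:]"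

definition xfx :: "nat \<Rightarrow> bit poly fract poly" where
  "xfx n = [:xK * to_fract (fx n):]"

lemma xfx_0: "xfx 0 = xc" and xfx_1: "xfx 1 = xc\<^sup>2 + xc"
  and xfx_Suc_Suc: "xfx (Suc (Suc n)) = xc * xfx (Suc n) + xfx n"
proof -
  have "to_fract (fx 1) = 1 + xK"
    by (simp add: homog_fz_0 xK_def one_pCons flip: to_fract_1 to_fract_add)
  moreover have "to_fract (fx (Suc (Suc n))) = xK * to_fract (fx (Suc n)) + to_fract (fx n)"
    unfolding fx_Suc_Suc by (simp add: xK_def flip: to_fract_add to_fract_mult)
  ultimately show "xfx 0 = xc" "xfx 1 = xc\<^sup>2 + xc" "xfx (Suc (Suc n)) = xc * xfx (Suc n) + xfx n"
    by (simp_all add: xfx_def xc_def algebra_simps power2_eq_square)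
qed

lemma mY_eq: "mY = rho\<^sup>2 + xc * rho + 1"
  by (simp add: mY_def rho_def xc_def power2_eq_square one_pCons)

lemma rho_root: "mY dvd rho\<^sup>2 - (xc * rho + 1)"
proof -
  have "rho\<^sup>2 - (xc * rho + 1) = mY - 2 * (xc * rho + 1)"
    unfolding mY_eq by algebra
  then show ?thesis by (simp add: two_K)
qed

lemma conj_root: "mY dvd (rho + xc)\<^sup>2 - (xc * (rho + xc) + 1)"
proof -
  have "(rho + xc)\<^sup>2 - (xc * (rho + xc) + 1) = rho\<^sup>2 - (xc * rho + 1) + 2 * (xc * rho)"
    by algebra
  then show ?thesis using rho_root by (simp only: two_K mult_zero_left add_0_right)
qed

text \<open>rho + xc is the other root of mY, i.e. rho^-1 in K (inverse_rho_cong).\<close>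

definition root_sum :: "nat \<Rightarrow> bit poly fract poly" where
  "root_sum n = (1 + rho) * rho ^ n + (1 + (rho + xc)) * (rho + xc) ^ n"

lemma dvd_lk_diff_root_sum: "mY dvd xfx n - root_sum n"
proof (rule dvd_diff_of_linear_recurrence[where c = xc])
  have "xfx 0 - root_sum 0 = - 2 * (1 + rho)"
    unfolding xfx_0 root_sum_def by algebra
  then show "mY dvd xfx 0 - root_sum 0"
    by (simp add: two_K)
  have "xfx 1 - root_sum 1 = - 2 * (rho + rho\<^sup>2 + xc * rho)"
    unfolding xfx_1 root_sum_def by algebra
  then show "mY dvd xfx 1 - root_sum 1"
    by (simp add: two_K)
  show "mY dvd xfx (Suc (Suc n)) - (xc * xfx (Suc n) + xfx n)" for n
    by (simp add: xfx_Suc_Suc)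
  fix n
  let ?r = "\<lambda>u s. u * s ^ Suc (Suc n) - (xc * (u * s ^ Suc n) + u * s ^ n)"
  have "root_sum (Suc (Suc n)) - (xc * root_sum (Suc n) + root_sum n)
      = ?r (1 + rho) rho + ?r (1 + (rho + xc)) (rho + xc)"
    unfolding root_sum_def by algebra
  then show "mY dvd root_sum (Suc (Suc n)) - (xc * root_sum (Suc n) + root_sum n)"
    using dvd_geometric_recurrence[OF rho_root] dvd_geometric_recurrence[OF conj_root]
    by (simp only: dvd_add)
qed

lemma inverse_rho_cong:
  assumes "(rho * rho_inv) mod mY = 1"
  shows "rho_inv mod mY = (rho + xc) mod mY"
proof -
  have "(1::bit poly fract poly) mod mY = 1"
    by (rule mod_poly_less) (simp add: mY_def)
  then have "mY dvd rho * rho_inv - 1"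
    using assms by (simp flip: mod_eq_dvd_iff)
  moreover have "rho_inv - (rho + xc)
      = rho_inv * mY - (rho + xc) * (rho * rho_inv - 1) - 2 * (rho + xc)"
    unfolding mY_eq by algebra
  ultimately have "mY dvd rho_inv - (rho + xc)"
    by (simp add: two_K)
  then show ?thesis by (simp add: mod_eq_dvd_iff)
qed

lemma xfx_mod:
  assumes "(rho * rho_inv) mod mY = 1"
  shows "xfx n mod mY = ((1 + rho) * rho ^ n + (1 + rho_inv) * rho_inv ^ n) mod mY"
proof -
  have inv: "rho_inv mod mY = (rho + xc) mod mY"
    using assms by (rule inverse_rho_cong)
  have "((1 + rho_inv) * rho_inv ^ n) mod mY = ((1 + (rho + xc)) * (rho + xc) ^ n) mod mY"
    by (intro mod_mult_cong mod_add_cong refl inv) (metis power_mod inv)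
  then have "((1 + rho) * rho ^ n + (1 + rho_inv) * rho_inv ^ n) mod mY = root_sum n mod mY"
    unfolding root_sum_def by (intro mod_add_cong refl)
  moreover have "xfx n mod mY = root_sum n mod mY"
    using dvd_lk_diff_root_sum by (simp add: mod_eq_dvd_iff)
  ultimately show ?thesis by simp
qed

theorem theorem4:
  fixes k :: nat and rho_inv :: "bit poly fract poly"
  assumes "k \<ge> 1"
    and "(rho * rho_inv) mod mY = 1"
  shows "[: xK * to_fract (eval_z1 (fst (fg (2 * k - 2)))) :] mod mY
           = ((1 + rho) * rho ^ k + (1 + rho_inv) * rho_inv ^ k) mod mY
       \<and> [: xK * to_fract (eval_z1 (fst (fg (2 * k - 1)))) :] mod mY
           = ((1 + rho) * rho ^ k + (1 + rho_inv) * rho_inv ^ k) mod mY"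
proof -
  obtain m where k: "k = Suc m" using assms(1) by (cases k) auto
  have "fst (fg (2 * k - 2)) = homog k (fz m)" "fst (fg (2 * k - 1)) = homog k (fz m)"
    using fg_even[of m] fst_fg_odd[of m] by (simp_all add: k)
  moreover have "[: xK * to_fract (eval_z1 (homog k (fz m))) :] = xfx k"
    by (simp add: xfx_def k)
  ultimately show ?thesis
    using xfx_mod[OF assms(2)] by simp
qed

end
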